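(* Let $t,t'\in B_n$ with $t\neq t'$, let $G$ be a digraph such that $\mathbb{A}(G)$ satisfies $t\approx t'$, and let $L=L_{t,t'}$. If $v_0\to v_1\to\dots\to v_{L+1}$ is a walk and $(v_L,v'_{L+1})$ is an edge in $G$ such that $v_{L+1}$ and $v'_{L+1}$ belong to nontrivial strongly connected components $K$ and $K'$ respectively, then $K=K'$. Consequently, $B_G<L_{t,t'}$.
   Context: Digraphs $G=(V,E)$ have $E\subseteq V\times V$, loops allowed, possibly infinite. $\mathbb{A}(G)$ is the groupoid on $V\cup\{\infty\}$ with $xy=x$ if $x,y\in V$, $(x,y)\in E$, and $xy=\infty$ otherwise. $B_n$: binary terms with $x_1,\dots,x_n$ each occurring once in this order; $G(t)$: rooted tree defined by $G(x_i)$ a single vertex and $G(t_1t_2)=G(t_1)\cup G(t_2)$ plus an edge from the leftmost variable of $t_1$ to that of $t_2$; root $x_1$. With $T=G(t)$, $T'=G(t')$ and depth $d_T$: $L_{t,t'}$ is the largest integer $m$ such that for all $x$, if $d_T(x)\le m$ or $d_{T'}(x)\le m$ then $d_T(x)=d_{T'}(x)$. A strongly connected component is trivial if it is a single vertex without a loop, nontrivial otherwise. $B_G$ is the largest integer $m$ such that there exist a walk $v_0\to\dots\to v_m$ and edges $(v_m,v_{m+1}),(v_m,v'_{m+1})$ with $v_{m+1},v'_{m+1}$ in distinct nontrivial strongly connected components ($\infty$ if unbounded, $-\infty$ if none). *)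

theory Defs
  imports Main "HOL-Library.Extended_Real"
begin

datatype bterm = Var nat | App bterm bterm

primrec vars :: "bterm \<Rightarrow> nat list" where
  "vars (Var i) = [i]"
| "vars (App s u) = vars s @ vars u"

text \<open>B_n: binary terms in which x_1,...,x_n each occur exactly once, in this order
  (variable x_i is encoded as Var i).\<close>
definition B :: "nat \<Rightarrow> bterm set" where
  "B n = {t. vars t = [1..<Suc n]}"

primrec leftmost :: "bterm \<Rightarrow> nat" where
  "leftmost (Var i) = i"
| "leftmost (App s u) = leftmost s"

text \<open>Edges of the rooted tree G(t); its vertex set is set (vars t), root leftmost t.\<close>
primrec tedges :: "bterm \<Rightarrow> (nat \<times> nat) set" where
  "tedges (Var i) = {}"
| "tedges (App s u) = tedges s \<union> tedges u \<union> {(leftmost s, leftmost u)}"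

definition depth :: "bterm \<Rightarrow> nat \<Rightarrow> nat" where
  "depth t x = (LEAST k. (leftmost t, x) \<in> (tedges t) ^^ k)"

definition Ltt :: "bterm \<Rightarrow> bterm \<Rightarrow> int" where
  "Ltt t t' = (GREATEST m::int. \<forall>x \<in> set (vars t).
       (int (depth t x) \<le> m \<or> int (depth t' x) \<le> m) \<longrightarrow> depth t x = depth t' x)"

text \<open>Universe V \<union> {\<infinity>}, with \<infinity> encoded as None.\<close>
definition Aop :: "('v \<times> 'v) set \<Rightarrow> 'v option \<Rightarrow> 'v option \<Rightarrow> 'v option" where
  "Aop E a b = (case (a, b) of
      (Some x, Some y) \<Rightarrow> (if (x, y) \<in> E then Some x else None)
    | _ \<Rightarrow> None)"

definition Acarrier :: "'v set \<Rightarrow> 'v option set" where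
  "Acarrier V = Some ` V \<union> {None}"

primrec evalA :: "('v \<times> 'v) set \<Rightarrow> (nat \<Rightarrow> 'v option) \<Rightarrow> bterm \<Rightarrow> 'v option" where
  "evalA E a (Var i) = a i"
| "evalA E a (App s u) = Aop E (evalA E a s) (evalA E a u)"

definition satisfies :: "'v set \<Rightarrow> ('v \<times> 'v) set \<Rightarrow> bterm \<Rightarrow> bterm \<Rightarrow> bool" where
  "satisfies V E t t' \<longleftrightarrow>
     (\<forall>a. (\<forall>i. a i \<in> Acarrier V) \<longrightarrow> evalA E a t = evalA E a t')"

definition is_scc :: "'v set \<Rightarrow> ('v \<times> 'v) set \<Rightarrow> 'v set \<Rightarrow> bool" where
  "is_scc V E K \<longleftrightarrow> (\<exists>v\<in>V. K = {u \<in> V. (v, u) \<in> E\<^sup>* \<and> (u, v) \<in> E\<^sup>*})"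

definition nontrivial_scc :: "'v set \<Rightarrow> ('v \<times> 'v) set \<Rightarrow> 'v set \<Rightarrow> bool" where
  "nontrivial_scc V E K \<longleftrightarrow> is_scc V E K \<and> \<not> (\<exists>v. K = {v} \<and> (v, v) \<notin> E)"

text \<open>B_G as an extended real: Sup of the admissible m (Sup {} = -\<infinity>, unbounded gives \<infinity>).\<close>
definition BG :: "'v set \<Rightarrow> ('v \<times> 'v) set \<Rightarrow> ereal" where
  "BG V E = Sup {ereal (real m) | m. \<exists>w v v' K K'.
      (\<forall>i<m. (w i, w (Suc i)) \<in> E) \<and> (w m, v) \<in> E \<and> (w m, v') \<in> E \<and>
      nontrivial_scc V E K \<and> nontrivial_scc V E K' \<and> K \<noteq> K' \<and> v \<in> K \<and> v' \<in> K'}"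

end

theory Submission
  imports Defs
begin

text \<open>Let \<open>L = L\<^sub>t\<^sub>,\<^sub>t\<^sub>'\<close> and let \<open>x\<close> be a vertex of smallest depth on which the trees \<open>G(t)\<close>
  and \<open>G(t')\<close> disagree, say with depth \<open>L + 1\<close> in \<open>G(t)\<close> and larger depth in \<open>G(t')\<close>. Its
  ancestor \<open>u\<close> at depth \<open>L + 1\<close> in \<open>G(t')\<close> is deeper than \<open>L\<close> in \<open>G(t)\<close> and, since edges of
  both trees increase the variable index, lies outside the subtree of \<open>x\<close> in \<open>G(t)\<close>.
  Given the walk to \<open>v\<^sub>L\<close> and infinite walks \<open>\<alpha>\<close> in \<open>K\<close> and \<open>\<beta>\<close> in \<open>K'\<close> starting at the two
  successors of \<open>v\<^sub>L\<close>, map the vertices of \<open>G(t)\<close> of depth at most \<open>L\<close> along the walk, the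
  subtree of \<open>x\<close> along \<open>\<alpha>\<close> and the remaining vertices along \<open>\<beta>\<close>, each according to depth.
  This is a homomorphism \<open>G(t) \<rightarrow> G\<close>; as \<open>\<A>(G)\<close> satisfies \<open>t \<approx> t'\<close> it is also a homomorphism
  \<open>G(t') \<rightarrow> G\<close>, so the path from \<open>u\<close> to \<open>x\<close> in \<open>G(t')\<close> yields a walk from \<open>K'\<close> into \<open>K\<close>.
  Exchanging the roles of \<open>\<alpha>\<close> and \<open>\<beta>\<close> gives a walk back, hence \<open>K = K'\<close>.
  Finally \<open>B\<^sub>G < L\<close>, because a fork into distinct components after a walk of length
  \<open>m \<ge> L\<close> also occurs after the last \<open>L\<close> steps of that walk.\<close>

lemma vars_not_Nil: "vars t \<noteq> []"
  by (induction t) auto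

lemma leftmost_eq_hd: "leftmost t = hd (vars t)"
  by (induction t) (auto simp: vars_not_Nil)

lemma leftmost_in_vars: "leftmost t \<in> set (vars t)"
  by (simp add: leftmost_eq_hd vars_not_Nil)

lemma tedges_in_vars: "(i, j) \<in> tedges t \<Longrightarrow> i \<in> set (vars t) \<and> j \<in> set (vars t)"
  by (induction t) (auto simp: leftmost_in_vars)

lemma tedges_less: "sorted_wrt (<) (vars t) \<Longrightarrow> (i, j) \<in> tedges t \<Longrightarrow> i < j"
  by (induction t) (auto simp: leftmost_in_vars sorted_wrt_append dest: tedges_in_vars)

lemma rtrancl_tedges_le:
  assumes "sorted_wrt (<) (vars t)" and "(i, j) \<in> (tedges t)\<^sup>*"
  shows "i \<le> j"
  using assms(2) by (induction rule: rtrancl_induct) (auto dest: tedges_less[OF assms(1)])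

lemma tedges_not_into_leftmost: "distinct (vars t) \<Longrightarrow> (i, j) \<in> tedges t \<Longrightarrow> j \<noteq> leftmost t"
proof (induction t)
  case (Var k)
  then show ?case by simp
next
  case (App s u)
  then have disj: "set (vars s) \<inter> set (vars u) = {}" by simp
  from App.prems(2) consider "(i, j) \<in> tedges s" | "(i, j) \<in> tedges u" | "j = leftmost u" by auto
  then show ?case
  proof cases
    case 1
    then show ?thesis using App by simp
  next
    case 2
    then show ?thesis using disj tedges_in_vars leftmost_in_vars[of s] by fastforce
  next
    case 3
    then show ?thesis using disj leftmost_in_vars[of s] leftmost_in_vars[of u] by auto
  qed
qed

lemma tedges_parent_unique:
  "distinct (vars t) \<Longrightarrow> (i, j) \<in> tedges t \<Longrightarrow> (k, j) \<in> tedges t \<Longrightarrow> i = k"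
  by (induction t) (auto simp: leftmost_in_vars dest: tedges_in_vars tedges_not_into_leftmost)

primrec level :: "bterm \<Rightarrow> nat \<Rightarrow> nat" where
  "level (Var i) x = 0"
| "level (App s u) x = (if x \<in> set (vars s) then level s x else Suc (level u x))"

lemma level_leftmost: "level t (leftmost t) = 0"
  by (induction t) (auto simp: leftmost_in_vars)

lemma level_eq_0_iff:
  assumes "distinct (vars t)" and "x \<in> set (vars t)"
  shows "level t x = 0 \<longleftrightarrow> x = leftmost t"
proof
  show "x = leftmost t" if "level t x = 0"
    using assms that by (induction t) (auto split: if_splits)
qed (simp add: level_leftmost)

lemma tedges_level: "distinct (vars t) \<Longrightarrow> (i, j) \<in> tedges t \<Longrightarrow> level t j = Suc (level t i)"
  by (induction t) (auto simp: leftmost_in_vars level_leftmost dest: tedges_in_vars)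

lemma relpow_mono:
  fixes R S :: "('a \<times> 'a) set"
  shows "R \<subseteq> S \<Longrightarrow> R ^^ n \<subseteq> S ^^ n"
  by (induction n) (simp_all add: relcomp_mono)

lemma relpow_tedges_level: "x \<in> set (vars t) \<Longrightarrow> (leftmost t, x) \<in> tedges t ^^ level t x"
proof (induction t arbitrary: x)
  case (Var i)
  then show ?case by auto
next
  case (App s u)
  have mono: "tedges s ^^ k \<subseteq> tedges (App s u) ^^ k" "tedges u ^^ k \<subseteq> tedges (App s u) ^^ k" for k
    by (auto intro!: relpow_mono)
  show ?case
  proof (cases "x \<in> set (vars s)")
    case True
    then show ?thesis using App.IH(1) mono(1) by auto
  next
    case False
    then have "(leftmost u, x) \<in> tedges (App s u) ^^ level u x" using App mono(2) by auto
    then have "(leftmost s, x) \<in> tedges (App s u) ^^ Suc (level u x)"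
      by (rule relpow_Suc_I2[rotated]) simp
    then show ?thesis using False by simp
  qed
qed

lemma level_if_relpow_tedges:
  assumes "distinct (vars t)"
  shows "(leftmost t, y) \<in> tedges t ^^ k \<Longrightarrow> level t y = k"
proof (induction k arbitrary: y)
  case 0
  then show ?case by (auto simp: level_leftmost)
next
  case (Suc k)
  then obtain z where "(leftmost t, z) \<in> tedges t ^^ k" "(z, y) \<in> tedges t" by auto
  then show ?case using Suc.IH tedges_level[OF assms] by simp
qed

lemma depth_eq_level: "distinct (vars t) \<Longrightarrow> x \<in> set (vars t) \<Longrightarrow> depth t x = level t x"
  unfolding depth_def
  by (rule Least_equality)
    (auto intro: relpow_tedges_level dest: level_if_relpow_tedges simp: level_leftmost)

lemma ancestor_at_level:
  assumes "distinct (vars t)" and "x \<in> set (vars t)" and "k \<le> level t x"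
  obtains u where "level t u = k" and "(u, x) \<in> (tedges t)\<^sup>*"
proof -
  have "(leftmost t, x) \<in> tedges t ^^ (k + (level t x - k))"
    using assms(2,3) relpow_tedges_level by simp
  then obtain u where "(leftmost t, u) \<in> tedges t ^^ k" "(u, x) \<in> tedges t ^^ (level t x - k)"
    unfolding relpow_add by blast
  then show thesis
    using that level_if_relpow_tedges[OF assms(1)] relpow_imp_rtrancl by blast
qed

text \<open>The right subterm is recovered from the levels: its root is the last variable at
  level 1, all its other variables being deeper.\<close>
lemma length_vars_App_le:
  assumes dist: "distinct (vars s @ vars u)" and vars: "vars s @ vars u = vars s' @ vars u'"
    and same_level: "level (App s u) (leftmost u') = level (App s' u') (leftmost u')"
  shows "length (vars s') \<le> length (vars s)"
proof (rule ccontr)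
  assume "\<not> ?thesis"
  moreover obtain us where "vars s = vars s' @ us \<and> us @ vars u = vars u' \<or>
      vars s @ us = vars s' \<and> vars u = us @ vars u'"
    using vars unfolding append_eq_append_conv2 by blast
  ultimately have us: "vars s' = vars s @ us" "vars u = us @ vars u'" "us \<noteq> []" by auto
  have l_in_u: "leftmost u' \<in> set (vars u)" and l_notin_us: "leftmost u' \<notin> set us"
    using dist us(2) leftmost_in_vars[of u'] by auto
  then have "leftmost u' \<noteq> leftmost u" using us by (auto simp: leftmost_eq_hd)
  then have "level u (leftmost u') \<noteq> 0" using dist l_in_u level_eq_0_iff[of u] by auto
  moreover have "leftmost u' \<notin> set (vars s)" "leftmost u' \<notin> set (vars s')"
    using dist l_in_u l_notin_us us(1) by auto
  ultimately show False using same_level by (simp add: level_leftmost)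
qed

lemma bterm_eq_if_levels_eq:
  "distinct (vars t) \<Longrightarrow> vars t = vars t' \<Longrightarrow> (\<forall>x\<in>set (vars t). level t x = level t' x) \<Longrightarrow> t = t'"
proof (induction t arbitrary: t')
  case (Var i)
  then show ?case by (cases t') (auto simp: Cons_eq_append_conv vars_not_Nil)
next
  case (App s u)
  then obtain s' u' where t': "t' = App s' u'"
    by (cases t') (auto simp: append_eq_Cons_conv vars_not_Nil)
  have dist: "distinct (vars s @ vars u)" using App.prems(1) by simp
  have vars: "vars s @ vars u = vars s' @ vars u'" using App.prems(2) t' by simp
  have levels: "level (App s u) x = level (App s' u') x" if "x \<in> set (vars s @ vars u)" for x
    using App.prems(3) that unfolding t' by (simp only: vars.simps)
  have dist': "distinct (vars s' @ vars u')" using dist vars by metis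
  have "level (App s u) (leftmost u') = level (App s' u') (leftmost u')"
    using levels vars leftmost_in_vars[of u'] by (metis Un_iff set_append)
  moreover have "level (App s' u') (leftmost u) = level (App s u) (leftmost u)"
    using levels leftmost_in_vars[of u] by simp
  ultimately have "length (vars s') \<le> length (vars s)" "length (vars s) \<le> length (vars s')"
    using length_vars_App_le[OF dist vars] length_vars_App_le[OF dist' vars[symmetric]] by simp_all
  then have ss: "vars s = vars s'" and uu: "vars u = vars u'"
    using vars by (simp_all add: append_eq_append_conv)
  have "level s x = level s' x" if "x \<in> set (vars s)" for x
    using levels[of x] that ss by simp
  moreover have "level u x = level u' x" if "x \<in> set (vars u)" for x
  proof -
    have "x \<notin> set (vars s')" using that dist ss by auto
    then show ?thesis using levels[of x] that ss by simp
  qed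
  ultimately show ?case using App.IH dist ss uu t' by simp
qed

definition tree_hom :: "('v \<times> 'v) set \<Rightarrow> bterm \<Rightarrow> (nat \<Rightarrow> 'v) \<Rightarrow> bool" where
  "tree_hom E t f \<longleftrightarrow> (\<forall>(i, j)\<in>tedges t. (f i, f j) \<in> E)"

lemma evalA_Some:
  "evalA E (\<lambda>i. Some (f i)) t = (if tree_hom E t f then Some (f (leftmost t)) else None)"
  by (induction t) (auto simp: tree_hom_def Aop_def)

lemma satisfies_commute: "satisfies V E t t' \<longleftrightarrow> satisfies V E t' t"
  unfolding satisfies_def by metis

lemma satisfies_tree_hom_iff:
  assumes "satisfies V E t t'" and "\<forall>i. f i \<in> V"
  shows "tree_hom E t f \<longleftrightarrow> tree_hom E t' f"
proof -
  have "\<forall>i. Some (f i) \<in> Acarrier V" using assms(2) by (simp add: Acarrier_def)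
  then have "evalA E (\<lambda>i. Some (f i)) t = evalA E (\<lambda>i. Some (f i)) t'"
    using assms(1)[unfolded satisfies_def, rule_format, of "\<lambda>i. Some (f i)"] by blast
  then show ?thesis unfolding evalA_Some by (simp split: if_splits)
qed

lemma tree_hom_rtrancl:
  assumes "tree_hom E t f" and "(i, j) \<in> (tedges t)\<^sup>*"
  shows "(f i, f j) \<in> E\<^sup>*"
  using assms(2)
  by (induction rule: rtrancl_induct)
    (use assms(1) in \<open>auto simp: tree_hom_def intro: rtrancl_into_rtrancl\<close>)

lemma tree_hom_walk_rays:
  assumes dist: "distinct (vars t)" and x: "level t x = Suc L"
    and walk: "\<forall>i<L. (w i, w (Suc i)) \<in> E"
    and rays: "\<forall>i. (\<alpha> i, \<alpha> (Suc i)) \<in> E" "\<forall>i. (\<beta> i, \<beta> (Suc i)) \<in> E"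
    and forks: "(w L, \<alpha> 0) \<in> E" "(w L, \<beta> 0) \<in> E"
  shows "tree_hom E t (\<lambda>y. if level t y \<le> L then w (level t y)
           else if (x, y) \<in> (tedges t)\<^sup>* then \<alpha> (level t y - Suc L) else \<beta> (level t y - Suc L))"
    (is "tree_hom E t ?f")
  unfolding tree_hom_def
proof clarify
  fix i j
  assume ij: "(i, j) \<in> tedges t"
  have lj: "level t j = Suc (level t i)" using tedges_level[OF dist ij] .
  consider "level t j \<le> L" | "level t j = Suc L" | "Suc L < level t j" by linarith
  then show "(?f i, ?f j) \<in> E"
  proof cases
    case 1
    then show ?thesis using walk lj by simp
  next
    case 2
    then show ?thesis using forks lj by simp
  next
    case 3
    have "(x, i) \<in> (tedges t)\<^sup>* \<longleftrightarrow> (x, j) \<in> (tedges t)\<^sup>*"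
    proof
      show "(x, j) \<in> (tedges t)\<^sup>*" if "(x, i) \<in> (tedges t)\<^sup>*"
        using that ij by (rule rtrancl_into_rtrancl)
      show "(x, i) \<in> (tedges t)\<^sup>*" if xj: "(x, j) \<in> (tedges t)\<^sup>*"
      proof -
        have "x \<noteq> j" using 3 x by auto
        then obtain k where "(x, k) \<in> (tedges t)\<^sup>*" "(k, j) \<in> tedges t"
          using xj by (metis rtranclE)
        then show ?thesis using tedges_parent_unique[OF dist _ ij] by blast
      qed
    qed
    moreover have "level t j - Suc L = Suc (level t i - Suc L)" using 3 lj by simp
    ultimately show ?thesis using 3 lj rays by simp
  qed
qed

lemma nontrivial_scc_successor:
  assumes EV: "E \<subseteq> V \<times> V" and K: "nontrivial_scc V E K" and a: "a \<in> K"
  obtains z where "z \<in> K" and "(a, z) \<in> E"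
proof -
  obtain c where c: "K = {u \<in> V. (c, u) \<in> E\<^sup>* \<and> (u, c) \<in> E\<^sup>*}"
    using K unfolding nontrivial_scc_def is_scc_def by blast
  show thesis
  proof (cases "K = {a}")
    case True
    then show thesis using K that unfolding nontrivial_scc_def by blast
  next
    case False
    then obtain b where b: "b \<in> K" "b \<noteq> a" using a by blast
    then have "(a, b) \<in> E\<^sup>+" using a c by (auto simp: rtrancl_eq_or_trancl intro: rtrancl_trans)
    then obtain z where z: "(a, z) \<in> E" "(z, b) \<in> E\<^sup>*" by (blast dest: tranclD)
    then have "z \<in> K" using EV a b c by (auto intro: rtrancl_trans rtrancl_into_rtrancl)
    then show thesis using that z by blast
  qed
qed

lemma nontrivial_scc_ray:
  assumes EV: "E \<subseteq> V \<times> V" and K: "nontrivial_scc V E K" and a: "a \<in> K"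
  obtains \<alpha> where "\<alpha> 0 = a" and "\<forall>i. \<alpha> i \<in> K \<and> (\<alpha> i, \<alpha> (Suc i)) \<in> E"
proof -
  have "\<exists>\<alpha>. \<forall>i. (\<alpha> i \<in> K \<and> (i = 0 \<longrightarrow> \<alpha> i = a)) \<and> (\<alpha> i, \<alpha> (Suc i)) \<in> E"
    by (rule dependent_nat_choice) (use a nontrivial_scc_successor[OF EV K] in blast)+
  then show thesis using that by blast
qed

lemma scc_eqI:
  assumes "is_scc V E K" and "is_scc V E K'" and "a \<in> K" "a' \<in> K" "b \<in> K'" "b' \<in> K'"
    and "(a, b) \<in> E\<^sup>*" "(b', a') \<in> E\<^sup>*"
  shows "K = K'"
proof -
  obtain c c' where c: "K = {u \<in> V. (c, u) \<in> E\<^sup>* \<and> (u, c) \<in> E\<^sup>*}"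
    and c': "K' = {u \<in> V. (c', u) \<in> E\<^sup>* \<and> (u, c') \<in> E\<^sup>*}"
    using assms(1,2) unfolding is_scc_def by blast
  have "(c, c') \<in> E\<^sup>*" "(c', c) \<in> E\<^sup>*" using assms c c' by (blast intro: rtrancl_trans)+
  then show ?thesis using c c' by (blast intro: rtrancl_trans)
qed

lemma Ltt_first_disagreement:
  assumes "t \<in> B n" and "t' \<in> B n" and "t \<noteq> t'"
  obtains L x where "Ltt t t' = int L"
    and "\<And>y. y \<in> set (vars t) \<Longrightarrow> level t y \<le> L \<or> level t' y \<le> L \<Longrightarrow> level t y = level t' y"
    and "x \<in> set (vars t)" and "min (level t x) (level t' x) = Suc L" and "level t x \<noteq> level t' x"
proof -
  have vars: "vars t' = vars t" "distinct (vars t)" using assms(1,2) by (simp_all add: B_def)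
  have depth: "depth t y = level t y" "depth t' y = level t' y" if "y \<in> set (vars t)" for y
    using depth_eq_level vars that by metis+
  define D where "D y \<longleftrightarrow> y \<in> set (vars t) \<and> level t y \<noteq> level t' y" for y
  have "\<exists>y. D y" using bterm_eq_if_levels_eq vars assms(3) unfolding D_def by metis
  then obtain x where x: "D x" and least: "\<And>y. D y \<Longrightarrow> min (level t x) (level t' x) \<le> min (level t y) (level t' y)"
    using ex_has_least_nat[of D _ "\<lambda>y. min (level t y) (level t' y)"] by blast
  have "leftmost t' = leftmost t" using vars by (simp add: leftmost_eq_hd)
  then have "min (level t x) (level t' x) \<noteq> 0"
    using x vars level_eq_0_iff[of t x] level_eq_0_iff[of t' x] unfolding D_def by auto
  then obtain L where L: "min (level t x) (level t' x) = Suc L" using not0_implies_Suc by blast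
  have agree: "level t y = level t' y" if "y \<in> set (vars t)" "level t y \<le> L \<or> level t' y \<le> L" for y
    using least[of y] that L unfolding D_def by fastforce
  have "Ltt t t' = int L"
    unfolding Ltt_def
  proof (rule Greatest_equality)
    fix m :: int
    assume m: "\<forall>y\<in>set (vars t). (int (depth t y) \<le> m \<or> int (depth t' y) \<le> m) \<longrightarrow> depth t y = depth t' y"
    have "\<not> (int (level t x) \<le> m \<or> int (level t' x) \<le> m)"
      using m[rule_format, of x] x depth unfolding D_def by auto
    then show "m \<le> int L" using L by (simp add: min_def not_le split: if_splits)
  qed (use agree depth in auto)
  then show thesis using that agree x L unfolding D_def by blast
qed

lemma fork_sccs_eq:
  assumes EV: "E \<subseteq> V \<times> V"
    and vars: "vars t' = vars t" "sorted_wrt (<) (vars t)"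
    and sat: "satisfies V E t t'"
    and agree: "\<And>y. y \<in> set (vars t) \<Longrightarrow> level t y \<le> L \<or> level t' y \<le> L \<Longrightarrow> level t y = level t' y"
    and x: "x \<in> set (vars t)" "level t x = Suc L" "Suc L < level t' x"
    and walk: "\<forall>i<Suc L. (w i, w (Suc i)) \<in> E" and fork: "(w L, v') \<in> E"
    and K: "nontrivial_scc V E K" "w (Suc L) \<in> K" and K': "nontrivial_scc V E K'" "v' \<in> K'"
  shows "K = K'"
proof -
  have dist: "distinct (vars t)" "distinct (vars t')" using vars by (simp_all add: strict_sorted_iff)
  have x': "x \<in> set (vars t')" using x(1) vars(1) by simp
  obtain u where u: "level t' u = Suc L" "(u, x) \<in> (tedges t')\<^sup>*"
    using ancestor_at_level[OF dist(2) x' less_imp_le[OF x(3)]] .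
  have "u \<noteq> x" using u(1) x(3) by auto
  then obtain z where "(u, z) \<in> tedges t'" using u(2) by (blast elim: converse_rtranclE)
  then have u_in: "u \<in> set (vars t)" using tedges_in_vars[of u z t'] vars(1) by simp
  have u_deep: "\<not> level t u \<le> L"
  proof
    assume "level t u \<le> L"
    then have "level t u = level t' u" using agree[OF u_in] by blast
    then show False using u(1) \<open>level t u \<le> L\<close> by simp
  qed
  have "u \<le> x" using rtrancl_tedges_le[of t' u x] u(2) vars by simp
  then have u_outside: "(x, u) \<notin> (tedges t)\<^sup>*"
    using rtrancl_tedges_le[OF vars(2), of x u] \<open>u \<noteq> x\<close> by auto
  have reach: "(\<beta> (level t u - Suc L), \<alpha> 0) \<in> E\<^sup>*"
    if rays: "\<forall>i. (\<alpha> i, \<alpha> (Suc i)) \<in> E" "\<forall>i. (\<beta> i, \<beta> (Suc i)) \<in> E"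
      and forks: "(w L, \<alpha> 0) \<in> E" "(w L, \<beta> 0) \<in> E" for \<alpha> \<beta>
  proof -
    define f where "f y = (if level t y \<le> L then w (level t y)
      else if (x, y) \<in> (tedges t)\<^sup>* then \<alpha> (level t y - Suc L) else \<beta> (level t y - Suc L))" for y
    have walk': "\<forall>i<L. (w i, w (Suc i)) \<in> E" using walk by simp
    have "tree_hom E t f"
      unfolding f_def by (rule tree_hom_walk_rays[OF dist(1) x(2) walk' rays forks])
    moreover have "\<forall>y. f y \<in> V"
    proof -
      have "w i \<in> V" if "i \<le> L" for i
      proof -
        have "(w i, w (Suc i)) \<in> E" using walk that by simp
        then show ?thesis using EV by blast
      qed
      moreover have "\<alpha> i \<in> V" "\<beta> i \<in> V" for i
        using EV rays(1)[rule_format, of i] rays(2)[rule_format, of i] by blast+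
      ultimately show ?thesis unfolding f_def by simp
    qed
    ultimately have "tree_hom E t' f" using satisfies_tree_hom_iff[OF sat] by blast
    then have "(f u, f x) \<in> E\<^sup>*" using u(2) by (rule tree_hom_rtrancl)
    moreover have "f u = \<beta> (level t u - Suc L)" using u_deep u_outside unfolding f_def by simp
    moreover have "f x = \<alpha> 0" using x(2) unfolding f_def by simp
    ultimately show ?thesis by simp
  qed
  obtain \<alpha> where \<alpha>: "\<alpha> 0 = w (Suc L)" "\<forall>i. \<alpha> i \<in> K \<and> (\<alpha> i, \<alpha> (Suc i)) \<in> E"
    using nontrivial_scc_ray[OF EV K] .
  obtain \<beta> where \<beta>: "\<beta> 0 = v'" "\<forall>i. \<beta> i \<in> K' \<and> (\<beta> i, \<beta> (Suc i)) \<in> E"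
    using nontrivial_scc_ray[OF EV K'] .
  have "(w L, w (Suc L)) \<in> E" using walk by simp
  then have "(\<alpha> (level t u - Suc L), \<beta> 0) \<in> E\<^sup>*" "(\<beta> (level t u - Suc L), \<alpha> 0) \<in> E\<^sup>*"
    using reach[of \<beta> \<alpha>] reach[of \<alpha> \<beta>] \<alpha> \<beta> fork by simp_all
  moreover have "is_scc V E K" "is_scc V E K'" using K(1) K'(1) by (simp_all add: nontrivial_scc_def)
  ultimately show ?thesis
    using scc_eqI[of V E K K' "\<alpha> (level t u - Suc L)" "\<alpha> 0" "\<beta> 0" "\<beta> (level t u - Suc L)"] \<alpha>(2) \<beta>(2)
    by blast
qed

lemma disagreement_fork_sccs_eq:
  assumes EV: "E \<subseteq> V \<times> V"
    and vars: "vars t' = vars t" "sorted_wrt (<) (vars t)"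
    and sat: "satisfies V E t t'"
    and agree: "\<And>y. y \<in> set (vars t) \<Longrightarrow> level t y \<le> L \<or> level t' y \<le> L \<Longrightarrow> level t y = level t' y"
    and x: "x \<in> set (vars t)" "min (level t x) (level t' x) = Suc L" "level t x \<noteq> level t' x"
    and walk: "\<forall>i<Suc L. (w i, w (Suc i)) \<in> E" and fork: "(w L, v') \<in> E"
    and K: "nontrivial_scc V E K" "w (Suc L) \<in> K" and K': "nontrivial_scc V E K'" "v' \<in> K'"
  shows "K = K'"
proof -
  from x(2,3) consider "level t x = Suc L" "Suc L < level t' x" | "level t' x = Suc L" "Suc L < level t x"
    by (cases "level t x \<le> level t' x") (simp_all add: min_def)
  then show ?thesis
  proof cases
    case 1
    show ?thesis by (rule fork_sccs_eq[OF EV vars sat agree x(1) 1 walk fork K K'])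
  next
    case 2
    have sat': "satisfies V E t' t" using sat satisfies_commute by blast
    have vars': "vars t = vars t'" "sorted_wrt (<) (vars t')" using vars by simp_all
    have agree': "level t' y = level t y"
      if "y \<in> set (vars t')" "level t' y \<le> L \<or> level t y \<le> L" for y
      using agree[of y] that vars(1) by auto
    have x': "x \<in> set (vars t')" using x vars by simp
    show ?thesis by (rule fork_sccs_eq[OF EV vars' sat' agree' x' 2 walk fork K K'])
  qed
qed

lemma BG_less:
  assumes merge: "\<And>w v' K K'. \<forall>i<Suc L. (w i, w (Suc i)) \<in> E \<Longrightarrow> (w L, v') \<in> E \<Longrightarrow>
      nontrivial_scc V E K \<Longrightarrow> nontrivial_scc V E K' \<Longrightarrow> w (Suc L) \<in> K \<Longrightarrow> v' \<in> K' \<Longrightarrow> K = K'"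
  shows "BG V E < ereal (real L)"
proof -
  have "BG V E \<le> ereal (real L - 1)"
    unfolding BG_def
  proof (rule Sup_least, clarify)
    fix m :: nat and w v v' K K'
    assume walk: "\<forall>i<m. (w i, w (Suc i)) \<in> E" and forks: "(w m, v) \<in> E" "(w m, v') \<in> E"
      and K: "nontrivial_scc V E K" "v \<in> K" and K': "nontrivial_scc V E K'" "v' \<in> K'"
      and "K \<noteq> K'"
    have "m < L"
    proof (rule ccontr)
      assume "\<not> m < L"
      define w' where "w' i = (if i \<le> L then w (i + (m - L)) else v)" for i
      have "(w' i, w' (Suc i)) \<in> E" if "i < Suc L" for i
      proof (cases "i = L")
        case True
        then show ?thesis using forks(1) \<open>\<not> m < L\<close> unfolding w'_def by simp
      next
        case False
        then have "i + (m - L) < m" using that \<open>\<not> m < L\<close> by simp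
        then show ?thesis using walk False that unfolding w'_def by auto
      qed
      moreover have "(w' L, v') \<in> E" "w' (Suc L) = v"
        using forks \<open>\<not> m < L\<close> unfolding w'_def by simp_all
      ultimately have "K = K'" using merge[of w' v' K K'] K K' by blast
      then show False using \<open>K \<noteq> K'\<close> by simp
    qed
    then show "ereal (real m) \<le> ereal (real L - 1)" by simp
  qed
  also have "\<dots> < ereal (real L)" by simp
  finally show ?thesis .
qed

theorem lemma6p19:
  fixes V :: "'v set" and E :: "('v \<times> 'v) set" and n :: nat and t t' :: bterm
  assumes "E \<subseteq> V \<times> V"
    and "t \<in> B n" and "t' \<in> B n" and "t \<noteq> t'"
    and "satisfies V E t t'"
  shows "(\<forall>(w :: nat \<Rightarrow> 'v) v' K K'.
            (\<forall>i < Suc (nat (Ltt t t')). (w i, w (Suc i)) \<in> E) \<and>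
            (w (nat (Ltt t t')), v') \<in> E \<and>
            nontrivial_scc V E K \<and> nontrivial_scc V E K' \<and>
            w (Suc (nat (Ltt t t'))) \<in> K \<and> v' \<in> K'
          \<longrightarrow> K = K')
       \<and> BG V E < ereal (real_of_int (Ltt t t'))"
proof -
  obtain L x where L: "Ltt t t' = int L"
    and agree: "\<And>y. y \<in> set (vars t) \<Longrightarrow> level t y \<le> L \<or> level t' y \<le> L \<Longrightarrow> level t y = level t' y"
    and x: "x \<in> set (vars t)" "min (level t x) (level t' x) = Suc L" "level t x \<noteq> level t' x"
    using Ltt_first_disagreement[OF assms(2-4)] by blast
  have vars: "vars t' = vars t" "sorted_wrt (<) (vars t)"
    using assms(2,3) by (simp_all add: B_def sorted_wrt_upt del: upt_Suc)
  have merge: "K = K'"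
    if "\<forall>i<Suc L. (w i, w (Suc i)) \<in> E" "(w L, v') \<in> E" "nontrivial_scc V E K" "w (Suc L) \<in> K"
      "nontrivial_scc V E K'" "v' \<in> K'"
    for w v' K K'
    by (rule disagreement_fork_sccs_eq[OF assms(1) vars assms(5) agree x that])
  show ?thesis
    unfolding L nat_int of_int_of_nat_eq
  proof (intro conjI allI impI)
    show "BG V E < ereal (real L)" by (rule BG_less[OF merge])
  qed (use merge in blast)
qed

end
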